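(* Let $\Sigma$ be a set of exclusion atoms and $x|y$ an exclusion atom. If $\Sigma\vdash x|y$, then $\Sigma\models x|y$.
   Context: A team $T$ is a finite set of assignments $s:\mathcal{V}\to M$, where $\mathcal{V}$ is a set of variables and $M$ a set of values. Letters $x,y,z,u,v,w,\dots$ denote finite tuples of variables; juxtaposition $xy$ denotes concatenation of tuples, and for $x=\langle x_1,\dots,x_n\rangle$, $s(x)=\langle s(x_1),\dots,s(x_n)\rangle$. An exclusion atom is an expression $x|y$ with $|x|=|y|$ (equal lengths), and $T\models x|y$ iff for all $s_1,s_2\in T$, $s_1(x)\neq s_2(y)$. For a set $\Sigma$ of atoms, $\Sigma\models x|y$ means every team satisfying all atoms of $\Sigma$ satisfies $x|y$. $\Sigma\vdash x|y$ means $x|y$ is derivable from $\Sigma$ using the following rules (schemata over arbitrary tuples of variables, with all atoms well-formed, i.e. both sides of equal length): (E1) $x|x\vdash y|z$; (E2) $x|y\vdash y|x$; (E3) $x|y\vdash xu|yv$; (E4) $xuu|yvv\vdash xu|yv$; (E5) $xyz|uvw\vdash xzy|uwv$ where $|x|=|u|$ and $|y|=|v|$; (E6) $xw|yw\vdash zz|xy$. *)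

theory Defs
  imports Main
begin

type_synonym 'v atom = "'v list \<times> 'v list"

definition wf_atom :: "'v atom \<Rightarrow> bool" where
  "wf_atom a \<longleftrightarrow> length (fst a) = length (snd a)"

definition team_sat :: "('v \<Rightarrow> 'm) set \<Rightarrow> 'v atom \<Rightarrow> bool" where
  "team_sat T a \<longleftrightarrow> (\<forall>s1\<in>T. \<forall>s2\<in>T. map s1 (fst a) \<noteq> map s2 (snd a))"

definition entails :: "'v atom set \<Rightarrow> 'v atom \<Rightarrow> 'm itself \<Rightarrow> bool" where
  "entails \<Sigma> a (_::'m itself) \<longleftrightarrow>
     (\<forall>T :: ('v \<Rightarrow> 'm) set. finite T \<longrightarrow> (\<forall>b\<in>\<Sigma>. team_sat T b) \<longrightarrow> team_sat T a)"

inductive derivable :: "'v atom set \<Rightarrow> 'v atom \<Rightarrow> bool" for \<Sigma> where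
  Hyp: "a \<in> \<Sigma> \<Longrightarrow> derivable \<Sigma> a"
| E1: "derivable \<Sigma> (x, x) \<Longrightarrow> length y = length z \<Longrightarrow> derivable \<Sigma> (y, z)"
| E2: "derivable \<Sigma> (x, y) \<Longrightarrow> derivable \<Sigma> (y, x)"
| E3: "derivable \<Sigma> (x, y) \<Longrightarrow> length u = length v \<Longrightarrow> derivable \<Sigma> (x @ u, y @ v)"
| E4: "derivable \<Sigma> (x @ u @ u, y @ v @ v) \<Longrightarrow> length (x @ u) = length (y @ v)
       \<Longrightarrow> derivable \<Sigma> (x @ u, y @ v)"
| E5: "derivable \<Sigma> (x @ y @ z, u @ v @ w) \<Longrightarrow> length x = length u \<Longrightarrow> length y = length v
       \<Longrightarrow> derivable \<Sigma> (x @ z @ y, u @ w @ v)"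
| E6: "derivable \<Sigma> (x @ w, y @ w) \<Longrightarrow> length (z @ z) = length (x @ y)
       \<Longrightarrow> derivable \<Sigma> (z @ z, x @ y)"

end

theory Submission
  imports Defs
begin

text \<open>Soundness by rule induction: each rule preserves satisfaction in an arbitrary team. Derivable atoms are well-formed, so the blocks of
  concatenated tuples have matching lengths and an equation between value tuples splits
  blockwise.\<close>

lemma map_append_eq_map_append_iff:
  assumes "length a = length c"
  shows "map s (a @ b) = map t (c @ d) \<longleftrightarrow> map s a = map t c \<and> map s b = map t d"
  using assms by (simp add: append_eq_append_conv)

lemma team_sat_self_imp_empty:
  assumes "team_sat T (x, x)"
  shows "T = {}"
  using assms by (auto simp: team_sat_def)

lemma team_sat_swap:
  assumes "team_sat T (x, y)"
  shows "team_sat T (y, x)"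
  using assms unfolding team_sat_def by (metis fst_conv snd_conv)

lemma team_sat_append:
  assumes "team_sat T (x, y)" and "length u = length v"
  shows "team_sat T (x @ u, y @ v)"
  using assms by (auto simp: team_sat_def append_eq_append_conv)

lemma team_sat_remove_duplicate_block:
  assumes "team_sat T (x @ u @ u, y @ v @ v)"
    and "length x = length y" and "length u = length v"
  shows "team_sat T (x @ u, y @ v)"
  using assms by (auto simp: team_sat_def map_append_eq_map_append_iff)

lemma team_sat_swap_blocks:
  assumes "team_sat T (x @ y @ z, u @ v @ w)"
    and "length x = length u" and "length y = length v" and "length z = length w"
  shows "team_sat T (x @ z @ y, u @ w @ v)"
  using assms by (auto simp: team_sat_def map_append_eq_map_append_iff)

lemma team_sat_diagonal:
  assumes "team_sat T (x @ w, y @ w)"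
    and "length x = length y" and "length z = length x"
  shows "team_sat T (z @ z, x @ y)"
  unfolding team_sat_def fst_conv snd_conv
proof (intro ballI)
  fix s1 s2 assume "s1 \<in> T" "s2 \<in> T"
  show "map s1 (z @ z) \<noteq> map s2 (x @ y)"
  proof
    assume "map s1 (z @ z) = map s2 (x @ y)"
    then have "map s1 z = map s2 x" "map s1 z = map s2 y"
      using assms(2,3) map_append_eq_map_append_iff by blast+
    then have "map s2 (x @ w) = map s2 (y @ w)" by simp
    with \<open>s2 \<in> T\<close> assms(1) show False unfolding team_sat_def by (metis fst_conv snd_conv)
  qed
qed

lemma derivable_wf_atom:
  assumes "derivable \<Sigma> a" and "\<forall>b\<in>\<Sigma>. wf_atom b"
  shows "wf_atom a"
  using assms by (induction rule: derivable.induct) (auto simp: wf_atom_def)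

lemma derivable_sound:
  assumes "derivable \<Sigma> a" and wf: "\<forall>b\<in>\<Sigma>. wf_atom b"
    and sat: "\<forall>b\<in>\<Sigma>. team_sat T b"
  shows "team_sat T a"
  using assms(1)
proof (induction rule: derivable.induct)
  case (Hyp a)
  then show ?case using sat by blast
next
  case (E1 x y z)
  from E1.IH have "T = {}" by (rule team_sat_self_imp_empty)
  then show ?case by (simp add: team_sat_def)
next
  case (E2 x y)
  from E2.IH show ?case by (rule team_sat_swap)
next
  case (E3 x y u v)
  from E3.IH E3.hyps(2) show ?case by (rule team_sat_append)
next
  case (E4 x u y v)
  from E4.hyps(1) wf have "wf_atom (x @ u @ u, y @ v @ v)" by (rule derivable_wf_atom)
  with E4.hyps(2) have "length x = length y" "length u = length v" by (auto simp: wf_atom_def)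
  with E4.IH show ?case by (rule team_sat_remove_duplicate_block)
next
  case (E5 x y z u v w)
  from E5.hyps(1) wf have "wf_atom (x @ y @ z, u @ v @ w)" by (rule derivable_wf_atom)
  with E5.hyps(2,3) have "length z = length w" by (simp add: wf_atom_def)
  with E5.IH E5.hyps(2,3) show ?case by (rule team_sat_swap_blocks)
next
  case (E6 x w y z)
  from E6.hyps(1) wf have "wf_atom (x @ w, y @ w)" by (rule derivable_wf_atom)
  with E6.hyps(2) have "length x = length y" "length z = length x" by (auto simp: wf_atom_def)
  with E6.IH show ?case by (rule team_sat_diagonal)
qed

theorem lemma1:
  fixes \<Sigma> :: "'v atom set" and x y :: "'v list"
  assumes "\<forall>a\<in>\<Sigma>. wf_atom a"
    and "wf_atom (x, y)"
    and "derivable \<Sigma> (x, y)"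
  shows "entails \<Sigma> (x, y) TYPE('m)"
  unfolding entails_def using derivable_sound[OF assms(3,1)] by blast

end
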